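(* Let $\Sigma,O$ be nominal $\mathrm{Sb}$-sets with $\dim(\Sigma)\le1$. Let $\mathcal{A}=(Q,\delta,o,q_0)$ be a nominal automaton with input alphabet $U\Sigma$ and output alphabet $UO$, and let $L\colon\Sigma^*\to O$ be the language accepted by $\mathcal{A}$. Suppose $L$ is $\mathrm{Sb}$-equivariant. Let $S\colon(U\Sigma)^{( * )}\to UO$ be the separated language accepted by the separated automaton $\mathcal{A}_*$. Then $L=\overline{S}$, where $\overline{S}\colon\Sigma^*\to O$ is the unique $\mathrm{Sb}$-equivariant function whose restriction to separated words is $S$.
   Context: Atoms $\mathbb{A}$ (countably infinite); $\mathrm{Sb}$ = monoid of functions $\mathbb{A}\to\mathbb{A}$ that are the identity outside a finite set; $\mathrm{Perm}$ its bijections. For $M\in\{\mathrm{Sb},\mathrm{Perm}\}$ a nominal $M$-set is an $M$-set whose elements $x$ have finite supports $C$ ($m_1|_C=m_2|_C\Rightarrow m_1x=m_2x$, $m_i\in M$); $\mathrm{supp}(x)$ is the least one; $\dim(X)=\max_x|\mathrm{supp}(x)|$. $U$ restricts $\mathrm{Sb}$-actions to $\mathrm{Perm}$. $x\perp y$ means disjoint supports; $A\otimes B=\{(a,b)\mid a\perp b\}$. $\Sigma^*$ is the set of words with pointwise action; $(U\Sigma)^{( * )}$ is the set of separated words (letters with pairwise disjoint supports). A nominal automaton $(Q,\delta,o,q_0)$ over input $\Sigma'$ and output $O'$ (nominal $\mathrm{Perm}$-sets) consists of a nominal $\mathrm{Perm}$-set $Q$, equivariant $\delta\colon Q\times\Sigma'\to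 Q$, equivariant $o\colon Q\to O'$, and $q_0\in Q$ with empty support; its semantics $l(x,\varepsilon)=o(x)$, $l(x,aw)=l(\delta(x,a),w)$, and its accepted language is $w\mapsto l(q_0,w)$. The separated automaton $\mathcal{A}_*=(Q,\delta|_{Q\otimes\Sigma'},o,q_0)$ has separated semantics $s$, defined on pairs $(x,w)$ with $w$ a separated word and $x\perp w$, by $s(x,\varepsilon)=o(x)$ and $s(x,aw)=s(\delta(x,a),w)$ whenever $x\perp aw$ and $a\perp w$; its accepted separated language is $w\mapsto s(q_0,w)$ on separated words. (A unique $\mathrm{Sb}$-equivariant extension $\overline{S}$ of any $\mathrm{Perm}$-equivariant $S\colon(U\Sigma)^{( * )}\to UO$ exists when $\dim\Sigma\le1$.) *)

theory Defs
  imports Main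
begin

type_synonym atom = nat

definition Sb :: "(atom \<Rightarrow> atom) set" where
  "Sb = {f. finite {a. f a \<noteq> a}}"

definition Perm :: "(atom \<Rightarrow> atom) set" where
  "Perm = {f \<in> Sb. bij f}"

definition is_Mset :: "(atom \<Rightarrow> atom) set \<Rightarrow> ((atom \<Rightarrow> atom) \<Rightarrow> 'x \<Rightarrow> 'x) \<Rightarrow> bool" where
  "is_Mset M act \<longleftrightarrow> (\<forall>x. act id x = x) \<and>
     (\<forall>m1\<in>M. \<forall>m2\<in>M. \<forall>x. act (m1 \<circ> m2) x = act m1 (act m2 x))"

definition supports :: "(atom \<Rightarrow> atom) set \<Rightarrow> ((atom \<Rightarrow> atom) \<Rightarrow> 'x \<Rightarrow> 'x) \<Rightarrow> atom set \<Rightarrow> 'x \<Rightarrow> bool" where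
  "supports M act C x \<longleftrightarrow>
     (\<forall>m1\<in>M. \<forall>m2\<in>M. (\<forall>a\<in>C. m1 a = m2 a) \<longrightarrow> act m1 x = act m2 x)"

definition nominal :: "(atom \<Rightarrow> atom) set \<Rightarrow> ((atom \<Rightarrow> atom) \<Rightarrow> 'x \<Rightarrow> 'x) \<Rightarrow> bool" where
  "nominal M act \<longleftrightarrow> is_Mset M act \<and> (\<forall>x. \<exists>C. finite C \<and> supports M act C x)"

text \<open>The least finite support (the intersection of all finite supports; for
  nominal sets this is itself a support).\<close>
definition supp :: "(atom \<Rightarrow> atom) set \<Rightarrow> ((atom \<Rightarrow> atom) \<Rightarrow> 'x \<Rightarrow> 'x) \<Rightarrow> 'x \<Rightarrow> atom set" where
  "supp M act x = \<Inter>{C. finite C \<and> supports M act C x}"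

definition dim_le_1 :: "(atom \<Rightarrow> atom) set \<Rightarrow> ((atom \<Rightarrow> atom) \<Rightarrow> 'x \<Rightarrow> 'x) \<Rightarrow> bool" where
  "dim_le_1 M act \<longleftrightarrow> (\<forall>x. card (supp M act x) \<le> 1)"

definition wact :: "((atom \<Rightarrow> atom) \<Rightarrow> 'x \<Rightarrow> 'x) \<Rightarrow> (atom \<Rightarrow> atom) \<Rightarrow> 'x list \<Rightarrow> 'x list" where
  "wact act m w = map (act m) w"

definition equivariant :: "(atom \<Rightarrow> atom) set \<Rightarrow> ((atom \<Rightarrow> atom) \<Rightarrow> 'x \<Rightarrow> 'x) \<Rightarrow>
    ((atom \<Rightarrow> atom) \<Rightarrow> 'y \<Rightarrow> 'y) \<Rightarrow> ('x \<Rightarrow> 'y) \<Rightarrow> bool" where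
  "equivariant M actX actY f \<longleftrightarrow> (\<forall>m\<in>M. \<forall>x. f (actX m x) = actY m (f x))"

definition separated :: "((atom \<Rightarrow> atom) \<Rightarrow> 'x \<Rightarrow> 'x) \<Rightarrow> 'x list \<Rightarrow> bool" where
  "separated act w \<longleftrightarrow> (\<forall>i<length w. \<forall>j<length w. i \<noteq> j \<longrightarrow>
      supp Perm act (w ! i) \<inter> supp Perm act (w ! j) = {})"

text \<open>Nominal automaton (Q, delta, o, q0) over input U Sigma and output U O
  (all actions restricted to Perm).\<close>
definition nominal_automaton ::
  "((atom \<Rightarrow> atom) \<Rightarrow> 'q \<Rightarrow> 'q) \<Rightarrow> ((atom \<Rightarrow> atom) \<Rightarrow> 's \<Rightarrow> 's) \<Rightarrow> ((atom \<Rightarrow> atom) \<Rightarrow> 'o \<Rightarrow> 'o) \<Rightarrow>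
   ('q \<Rightarrow> 's \<Rightarrow> 'q) \<Rightarrow> ('q \<Rightarrow> 'o) \<Rightarrow> 'q \<Rightarrow> bool" where
  "nominal_automaton actQ actS actO \<delta> out q0 \<longleftrightarrow>
     nominal Perm actQ \<and> nominal Perm actS \<and> nominal Perm actO \<and>
     (\<forall>m\<in>Perm. \<forall>q a. \<delta> (actQ m q) (actS m a) = actQ m (\<delta> q a)) \<and>
     equivariant Perm actQ actO out \<and>
     supp Perm actQ q0 = {}"

fun sem :: "('q \<Rightarrow> 's \<Rightarrow> 'q) \<Rightarrow> ('q \<Rightarrow> 'o) \<Rightarrow> 'q \<Rightarrow> 's list \<Rightarrow> 'o" where
  "sem \<delta> out x [] = out x"
| "sem \<delta> out x (a # w) = sem \<delta> out (\<delta> x a) w"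

definition accepted :: "('q \<Rightarrow> 's \<Rightarrow> 'q) \<Rightarrow> ('q \<Rightarrow> 'o) \<Rightarrow> 'q \<Rightarrow> 's list \<Rightarrow> 'o" where
  "accepted \<delta> out q0 w = sem \<delta> out q0 w"

text \<open>Separated semantics s of the separated automaton: partial, None outside
  its domain. delta is only ever used on pairs in Q \<otimes> Sigma (since x \<perp> aw).\<close>
fun sep_sem :: "((atom \<Rightarrow> atom) \<Rightarrow> 'q \<Rightarrow> 'q) \<Rightarrow> ((atom \<Rightarrow> atom) \<Rightarrow> 's \<Rightarrow> 's) \<Rightarrow>
    ('q \<Rightarrow> 's \<Rightarrow> 'q) \<Rightarrow> ('q \<Rightarrow> 'o) \<Rightarrow> 'q \<Rightarrow> 's list \<Rightarrow> 'o option" where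
  "sep_sem actQ actS \<delta> out x [] = Some (out x)"
| "sep_sem actQ actS \<delta> out x (a # w) =
     (if supp Perm actQ x \<inter> supp Perm (wact actS) (a # w) = {} \<and>
         supp Perm actS a \<inter> supp Perm (wact actS) w = {}
      then sep_sem actQ actS \<delta> out (\<delta> x a) w else None)"

definition sep_accepted :: "((atom \<Rightarrow> atom) \<Rightarrow> 'q \<Rightarrow> 'q) \<Rightarrow> ((atom \<Rightarrow> atom) \<Rightarrow> 's \<Rightarrow> 's) \<Rightarrow>
    ('q \<Rightarrow> 's \<Rightarrow> 'q) \<Rightarrow> ('q \<Rightarrow> 'o) \<Rightarrow> 'q \<Rightarrow> 's list \<Rightarrow> 'o option" where
  "sep_accepted actQ actS \<delta> out q0 w =
     (if separated actS w \<and> supp Perm actQ q0 \<inter> supp Perm (wact actS) w = {}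
      then sep_sem actQ actS \<delta> out q0 w else None)"

definition Sb_ext :: "((atom \<Rightarrow> atom) \<Rightarrow> 's \<Rightarrow> 's) \<Rightarrow> ((atom \<Rightarrow> atom) \<Rightarrow> 'o \<Rightarrow> 'o) \<Rightarrow>
    ('s list \<Rightarrow> 'o option) \<Rightarrow> 's list \<Rightarrow> 'o" where
  "Sb_ext actS actO S = (THE F. equivariant Sb (wact actS) actO F \<and>
      (\<forall>w. separated actS w \<longrightarrow> S w = Some (F w)))"

end

theory Submission
  imports Defs
begin

text \<open>The accepted language L itself has the two properties characterising the extension
  of S. It is Sb-equivariant by hypothesis, and it agrees with S on separated words: since
  \<delta> is equivariant, supp (\<delta> x a) \<subseteq> supp x \<union> supp a, so along a separated word the run
  never leaves Q \<otimes> \<Sigma> and the separated automaton produces the same output. For uniqueness,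
  every letter has at most one atom in its support; renaming the atom of the i-th letter
  to i turns any word into a separated word, from which the original is recovered by a
  single substitution. Hence an Sb-equivariant function on words is determined by its
  values on separated words.\<close>

lemma supp_subset_supports:
  "finite C \<Longrightarrow> supports M act C x \<Longrightarrow> supp M act x \<subseteq> C"
  by (auto simp: supp_def)

lemma supportsD:
  "supports M act C x \<Longrightarrow> m1 \<in> M \<Longrightarrow> m2 \<in> M \<Longrightarrow> (\<And>a. a \<in> C \<Longrightarrow> m1 a = m2 a)
    \<Longrightarrow> act m1 x = act m2 x"
  unfolding supports_def by blast

lemma supports_mono: "supports M act C x \<Longrightarrow> C \<subseteq> D \<Longrightarrow> supports M act D x"
  unfolding supports_def by blast

lemma Perm_subset_Sb: "Perm \<subseteq> Sb"
  by (auto simp: Perm_def)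

lemma comp_in_Sb: "m1 \<in> Sb \<Longrightarrow> m2 \<in> Sb \<Longrightarrow> m1 \<circ> m2 \<in> Sb"
proof -
  assume "m1 \<in> Sb" "m2 \<in> Sb"
  moreover have "{z. (m1 \<circ> m2) z \<noteq> z} \<subseteq> {z. m1 z \<noteq> z} \<union> {z. m2 z \<noteq> z}" by auto
  ultimately show ?thesis unfolding Sb_def by (auto intro: finite_subset)
qed

lemma supports_Int_Sb:
  assumes C: "supports Sb act C x" and D: "supports Sb act D x"
  shows "supports Sb act (C \<inter> D) x"
  unfolding supports_def
proof (intro ballI impI)
  fix m1 m2 assume m: "m1 \<in> Sb" "m2 \<in> Sb" and agree: "\<forall>a\<in>C \<inter> D. m1 a = m2 a"
  define m where "m z = (if z \<in> C then m1 z else m2 z)" for z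
  have "{z. m z \<noteq> z} \<subseteq> {z. m1 z \<noteq> z} \<union> {z. m2 z \<noteq> z}" by (auto simp: m_def)
  with m have "m \<in> Sb" unfolding Sb_def by (auto intro: finite_subset)
  have "act m1 x = act m x"
    by (rule supportsD[OF C m(1) \<open>m \<in> Sb\<close>]) (simp add: m_def)
  also have "\<dots> = act m2 x"
    by (rule supportsD[OF D \<open>m \<in> Sb\<close> m(2)]) (use agree in \<open>simp add: m_def\<close>)
  finally show "act m1 x = act m2 x" .
qed

text \<open>A support of least cardinality lies in every other support, because its intersection
  with that support is again a support.\<close>

lemma supports_supp_Sb:
  assumes "nominal Sb act"
  shows "finite (supp Sb act x)" and "supports Sb act (supp Sb act x) x"
proof -
  define P where "P n \<longleftrightarrow> (\<exists>C. finite C \<and> supports Sb act C x \<and> card C = n)" for n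
  have "\<exists>n. P n" using assms unfolding nominal_def P_def by blast
  then have "P (LEAST n. P n)" by (rule LeastI_ex)
  then obtain C where C: "finite C" "supports Sb act C x" "card C = (LEAST n. P n)"
    unfolding P_def by blast
  have "C \<subseteq> D" if "finite D" "supports Sb act D x" for D
  proof -
    have "P (card (C \<inter> D))"
      unfolding P_def using C(1) supports_Int_Sb[OF C(2) that(2)] by blast
    then have "card C \<le> card (C \<inter> D)" using C(3) by (simp add: Least_le)
    then show ?thesis using card_seteq[OF C(1) inf_le1] by blast
  qed
  then have "supp Sb act x = C"
    using supp_subset_supports[OF C(1,2)] unfolding supp_def by blast
  with C show "finite (supp Sb act x)" "supports Sb act (supp Sb act x) x" by simp_all
qed

lemma supports_apply2:
  assumes f: "\<forall>m\<in>M. \<forall>x y. f (actX m x) (actY m y) = actZ m (f x y)"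
    and X: "supports M actX C x" and Y: "supports M actY D y"
  shows "supports M actZ (C \<union> D) (f x y)"
  unfolding supports_def
proof (intro ballI impI)
  fix m1 m2 assume m: "m1 \<in> M" "m2 \<in> M" and agree: "\<forall>a\<in>C \<union> D. m1 a = m2 a"
  have "actZ m1 (f x y) = f (actX m1 x) (actY m1 y)"
    using f m(1) by simp
  also have "\<dots> = f (actX m2 x) (actY m2 y)"
    using supportsD[OF X m] supportsD[OF Y m] agree by simp
  also have "\<dots> = actZ m2 (f x y)"
    using f m(2) by simp
  finally show "actZ m1 (f x y) = actZ m2 (f x y)" .
qed

lemma notin_suppE:
  assumes "z \<notin> supp M act x"
  obtains C where "finite C" "supports M act C x" "z \<notin> C"
  using assms by (auto simp: supp_def)

lemma supp_apply2_subset: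
  assumes f: "\<forall>m\<in>M. \<forall>x y. f (actX m x) (actY m y) = actZ m (f x y)"
  shows "supp M actZ (f x y) \<subseteq> supp M actX x \<union> supp M actY y"
proof
  fix z assume z: "z \<in> supp M actZ (f x y)"
  show "z \<in> supp M actX x \<union> supp M actY y"
  proof (rule ccontr)
    assume "z \<notin> supp M actX x \<union> supp M actY y"
    then have "z \<notin> supp M actX x" and "z \<notin> supp M actY y" by simp_all
    then obtain C D where C: "finite C" "supports M actX C x" "z \<notin> C"
      and D: "finite D" "supports M actY D y" "z \<notin> D"
      by (elim notin_suppE)
    have "supp M actZ (f x y) \<subseteq> C \<union> D"
      using C D supports_apply2[OF f] by (simp add: supp_subset_supports)
    with z C D show False by blast
  qed
qed

lemma supp_word_subset: "supp M (wact act) w \<subseteq> (\<Union>b\<in>set w. supp M act b)"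
proof (induction w)
  case Nil
  have "supp M (wact act) [] \<subseteq> {}"
    by (rule supp_subset_supports) (simp_all add: supports_def wact_def)
  then show ?case by simp
next
  case (Cons a w)
  have "supp M (wact act) (a # w) \<subseteq> supp M act a \<union> supp M (wact act) w"
    by (rule supp_apply2_subset[where f = Cons]) (simp add: wact_def)
  with Cons.IH show ?case by auto
qed

lemma separated_ConsD:
  assumes "separated act (a # w)"
  shows "separated act w" and "\<forall>b\<in>set w. supp Perm act a \<inter> supp Perm act b = {}"
proof -
  have disj: "supp Perm act ((a # w) ! i) \<inter> supp Perm act ((a # w) ! j) = {}"
    if "i < Suc (length w)" "j < Suc (length w)" "i \<noteq> j" for i j
    using assms that unfolding separated_def by simp
  show "separated act w"
    unfolding separated_def
  proof (intro allI impI)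
    fix i j assume "i < length w" "j < length w" "i \<noteq> j"
    then show "supp Perm act (w ! i) \<inter> supp Perm act (w ! j) = {}"
      using disj[of "Suc i" "Suc j"] by simp
  qed
  show "\<forall>b\<in>set w. supp Perm act a \<inter> supp Perm act b = {}"
  proof
    fix b assume "b \<in> set w"
    then obtain j where "j < length w" "b = w ! j" by (auto simp: in_set_conv_nth)
    then show "supp Perm act a \<inter> supp Perm act b = {}"
      using disj[of 0 "Suc j"] by simp
  qed
qed

lemma sep_sem_eq_Some_sem:
  assumes \<delta>: "\<forall>m\<in>Perm. \<forall>q a. \<delta> (actQ m q) (actS m a) = actQ m (\<delta> q a)"
  shows "separated actS w \<Longrightarrow> supp Perm actQ x \<inter> (\<Union>b\<in>set w. supp Perm actS b) = {}
    \<Longrightarrow> sep_sem actQ actS \<delta> out x w = Some (sem \<delta> out x w)"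
proof (induction w arbitrary: x)
  case Nil
  then show ?case by simp
next
  case (Cons a w)
  have sep_w: "separated actS w"
    and a_w: "\<forall>b\<in>set w. supp Perm actS a \<inter> supp Perm actS b = {}"
    using separated_ConsD[OF Cons.prems(1)] by simp_all
  have x_aw: "supp Perm actQ x \<inter> (supp Perm actS a \<union> (\<Union>b\<in>set w. supp Perm actS b)) = {}"
    using Cons.prems(2) by simp
  have "supp Perm actQ (\<delta> x a) \<subseteq> supp Perm actQ x \<union> supp Perm actS a"
    by (rule supp_apply2_subset[OF \<delta>])
  with x_aw a_w have "supp Perm actQ (\<delta> x a) \<inter> (\<Union>b\<in>set w. supp Perm actS b) = {}"
    by blast
  with sep_w have IH: "sep_sem actQ actS \<delta> out (\<delta> x a) w = Some (sem \<delta> out (\<delta> x a) w)"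
    by (rule Cons.IH)
  have "supp Perm actQ x \<inter> supp Perm (wact actS) (a # w) = {}"
    using x_aw supp_word_subset[of Perm actS "a # w"] by auto
  moreover have "supp Perm actS a \<inter> supp Perm (wact actS) w = {}"
    using a_w supp_word_subset[of Perm actS w] by blast
  ultimately show ?case
    using IH by simp
qed

lemma sep_accepted_eq_accepted:
  assumes "\<forall>m\<in>Perm. \<forall>q a. \<delta> (actQ m q) (actS m a) = actQ m (\<delta> q a)"
    and "supp Perm actQ q0 = {}" and "separated actS w"
  shows "sep_accepted actQ actS \<delta> out q0 w = Some (accepted \<delta> out q0 w)"
  using sep_sem_eq_Some_sem[OF assms(1,3), where x = q0] assms(2)
  by (simp add: sep_accepted_def accepted_def assms(3))

lemma upd_id_in_Sb: "id(x := i) \<in> Sb"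
proof -
  have "{z. (id(x := i)) z \<noteq> z} \<subseteq> {x}" by auto
  then show ?thesis unfolding Sb_def by (auto intro: finite_subset)
qed

lemma supports_image_Sb:
  assumes act: "is_Mset Sb act" and C: "supports Sb act C b" and "\<sigma> \<in> Sb"
  shows "supports Sb act (\<sigma> ` C) (act \<sigma> b)"
  unfolding supports_def
proof (intro ballI impI)
  fix m1 m2 assume m: "m1 \<in> Sb" "m2 \<in> Sb" and agree: "\<forall>z\<in>\<sigma> ` C. m1 z = m2 z"
  have "act m1 (act \<sigma> b) = act (m1 \<circ> \<sigma>) b"
    using act m \<open>\<sigma> \<in> Sb\<close> unfolding is_Mset_def by simp
  also have "\<dots> = act (m2 \<circ> \<sigma>) b"
    by (rule supportsD[OF C comp_in_Sb comp_in_Sb]) (use m \<open>\<sigma> \<in> Sb\<close> agree in auto)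
  also have "\<dots> = act m2 (act \<sigma> b)"
    using act m \<open>\<sigma> \<in> Sb\<close> unfolding is_Mset_def by simp
  finally show "act m1 (act \<sigma> b) = act m2 (act \<sigma> b)" .
qed

lemma supp_Perm_rename_subset:
  assumes "is_Mset Sb act" and "supports Sb act {x} b"
  shows "supp Perm act (act (id(x := i)) b) \<subseteq> {i}"
proof -
  have "supports Sb act {i} (act (id(x := i)) b)"
    using supports_image_Sb[OF assms upd_id_in_Sb[of x i]] by simp
  then have "supports Perm act {i} (act (id(x := i)) b)"
    using Perm_subset_Sb unfolding supports_def by blast
  then show ?thesis by (simp add: supp_subset_supports)
qed

lemma act_rename_inverse:
  assumes act: "is_Mset Sb act" and x: "supports Sb act {x} b" and "m \<in> Sb" "m i = x"
  shows "act m (act (id(x := i)) b) = b"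
proof -
  have "act m (act (id(x := i)) b) = act (m \<circ> id(x := i)) b"
    using act \<open>m \<in> Sb\<close> upd_id_in_Sb unfolding is_Mset_def by simp
  also have "\<dots> = act id b"
    by (rule supportsD[OF x comp_in_Sb[OF \<open>m \<in> Sb\<close> upd_id_in_Sb]]) (auto simp: Sb_def \<open>m i = x\<close>)
  also have "\<dots> = b"
    using act unfolding is_Mset_def by simp
  finally show ?thesis .
qed

lemma supports_singleton_if_dim_le_1:
  assumes "nominal Sb act" and "dim_le_1 Sb act"
  shows "\<exists>x. supports Sb act {x} b"
proof -
  have "card (supp Sb act b) \<le> 1"
    using assms(2) unfolding dim_le_1_def by blast
  then obtain x where "supp Sb act b \<subseteq> {x}"
    using supports_supp_Sb(1)[OF assms(1)] by (metis card_le_Suc0_iff_eq One_nat_def insertI1 subsetI)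
  then show ?thesis
    using supports_mono[OF supports_supp_Sb(2)[OF assms(1)]] by blast
qed

lemma ex_separated_preimage:
  assumes "nominal Sb act" and "dim_le_1 Sb act"
  shows "\<exists>m\<in>Sb. \<exists>w'. separated act w' \<and> wact act m w' = w"
proof -
  have act: "is_Mset Sb act"
    using assms(1) unfolding nominal_def by blast
  have "\<forall>b. \<exists>y. supports Sb act {y} b"
    using supports_singleton_if_dim_le_1[OF assms] by blast
  then obtain x where x: "\<And>b. supports Sb act {x b} b"
    by metis
  \<comment> \<open>The i-th letter gets its atom renamed to i; m undoes all these renamings at once.\<close>
  define w' where "w' = map (\<lambda>i. act (id(x (w ! i) := i)) (w ! i)) [0..<length w]"
  define m where "m z = (if z < length w then x (w ! z) else z)" for z
  have "{z. m z \<noteq> z} \<subseteq> {..<length w}"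
    by (auto simp: m_def)
  then have "m \<in> Sb"
    unfolding Sb_def by (auto intro: finite_subset)
  have supp_w': "supp Perm act (w' ! i) \<subseteq> {i}" if "i < length w" for i
    using supp_Perm_rename_subset[OF act x] that by (simp add: w'_def)
  have "separated act w'"
    unfolding separated_def
  proof (intro allI impI)
    fix i j assume "i < length w'" "j < length w'" "i \<noteq> j"
    then show "supp Perm act (w' ! i) \<inter> supp Perm act (w' ! j) = {}"
      using supp_w'[of i] supp_w'[of j] by (auto simp: w'_def)
  qed
  moreover have "wact act m w' = w"
  proof (rule nth_equalityI)
    show "length (wact act m w') = length w"
      by (simp add: wact_def w'_def)
    fix i assume "i < length (wact act m w')"
    then have "i < length w"
      by (simp add: wact_def w'_def)
    then show "wact act m w' ! i = w ! i"
      using act_rename_inverse[OF act x \<open>m \<in> Sb\<close>] by (simp add: wact_def w'_def m_def)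
  qed
  ultimately show ?thesis
    using \<open>m \<in> Sb\<close> by blast
qed

lemma equivariant_eqI_separated:
  assumes "nominal Sb actS" and "dim_le_1 Sb actS"
    and F: "equivariant Sb (wact actS) actO F" and G: "equivariant Sb (wact actS) actO G"
    and FG: "\<And>w. separated actS w \<Longrightarrow> F w = G w"
  shows "F = G"
proof
  fix w
  obtain m w' where "m \<in> Sb" "separated actS w'" "w = wact actS m w'"
    using ex_separated_preimage[OF assms(1,2)] by metis
  then show "F w = G w"
    using F G FG unfolding equivariant_def by simp
qed

lemma Sb_ext_eqI:
  assumes "nominal Sb actS" and "dim_le_1 Sb actS"
    and F: "equivariant Sb (wact actS) actO F"
    and S: "\<And>w. separated actS w \<Longrightarrow> S w = Some (F w)"
  shows "Sb_ext actS actO S = F"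
  unfolding Sb_ext_def
proof (rule the_equality)
  show "equivariant Sb (wact actS) actO F \<and> (\<forall>w. separated actS w \<longrightarrow> S w = Some (F w))"
    using F S by blast
next
  fix G
  assume "equivariant Sb (wact actS) actO G \<and> (\<forall>w. separated actS w \<longrightarrow> S w = Some (G w))"
  then show "G = F"
    using equivariant_eqI_separated[OF assms(1,2) _ F] S by simp
qed

theorem mainTheorem10:
  fixes actS :: "(atom \<Rightarrow> atom) \<Rightarrow> 's \<Rightarrow> 's"
    and actO :: "(atom \<Rightarrow> atom) \<Rightarrow> 'o \<Rightarrow> 'o"
    and actQ :: "(atom \<Rightarrow> atom) \<Rightarrow> 'q \<Rightarrow> 'q"
    and \<delta> :: "'q \<Rightarrow> 's \<Rightarrow> 'q" and out :: "'q \<Rightarrow> 'o" and q0 :: 'q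
  assumes "nominal Sb actS" and "nominal Sb actO"
    and "dim_le_1 Sb actS"
    and "nominal_automaton actQ actS actO \<delta> out q0"
    and "equivariant Sb (wact actS) actO (accepted \<delta> out q0)"
  shows "accepted \<delta> out q0 = Sb_ext actS actO (sep_accepted actQ actS \<delta> out q0)"
proof -
  have \<delta>: "\<forall>m\<in>Perm. \<forall>q a. \<delta> (actQ m q) (actS m a) = actQ m (\<delta> q a)"
    and q0: "supp Perm actQ q0 = {}"
    using assms(4) unfolding nominal_automaton_def by simp_all
  have "Sb_ext actS actO (sep_accepted actQ actS \<delta> out q0) = accepted \<delta> out q0"
    by (rule Sb_ext_eqI[OF assms(1,3,5)]) (rule sep_accepted_eq_accepted[OF \<delta> q0])
  then show ?thesis
    by (rule sym)
qed

end
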